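(* Let $P\subset\mathbb{R}^d$ be a polytope, let $0<\gamma<1$, and let $\mathcal{X}=\{\mathbf{x}\in\mathbb{R}^d:\|\mathbf{x}\|\le1\}$. Suppose $P^{[-\gamma]}\cap\mathcal{X}\neq\emptyset$. Then $\partial P^{[\gamma^2/2]}\cap\mathcal{X}\subseteq\partial P^{(\gamma)}$.
   Context: Write $P=\{\mathbf{x}:\mathbf{w}_i\cdot\mathbf{x}+b_i\ge0\ \forall i\}$ where the halfspaces $\{\mathbf{w}_i\cdot\mathbf{x}+b_i\ge0\}$, $\|\mathbf{w}_i\|=1$, are those defining the facets of $P$. For $\alpha>0$: $P^{[+\alpha]}=\{\mathbf{x}:\mathbf{w}_i\cdot\mathbf{x}+b_i\ge-\alpha\ \forall i\}$ (each facet halfspace moved outward by $\alpha$), $P^{[-\alpha]}=\{\mathbf{x}:\mathbf{w}_i\cdot\mathbf{x}+b_i\ge\alpha\ \forall i\}$ (moved inward by $\alpha$). With $B_\alpha=\{\mathbf{p}:\|\mathbf{p}\|\le\alpha\}$, $P^{(+\alpha)}=P+B_\alpha$ (Minkowski sum) and $P^{(-\alpha)}=P-B_\alpha=\{\mathbf{p}:\{\mathbf{p}\}+B_\alpha\subseteq P\}$. The $\alpha$-margin of $P$ is $\partial P^{[\alpha]}=P^{[+\alpha]}\setminus P^{[-\alpha]}$ and the $\alpha$-envelope of $P$ is $\partial P^{(\alpha)}=P^{(+\alpha)}\setminus P^{(-\alpha)}$. *)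

theory Defs
  imports "HOL-Analysis.Analysis"
begin

definition facet_rep :: "'i set \<Rightarrow> ('i \<Rightarrow> 'a::euclidean_space) \<Rightarrow> ('i \<Rightarrow> real) \<Rightarrow> 'a set \<Rightarrow> bool" where
  "facet_rep I w b P \<longleftrightarrow>
     finite I \<and>
     (\<forall>i\<in>I. norm (w i) = 1) \<and>
     P = {x. \<forall>i\<in>I. w i \<bullet> x + b i \<ge> 0} \<and>
     (\<forall>i\<in>I. (P \<inter> {x. w i \<bullet> x + b i = 0}) facet_of P) \<and>
     (\<forall>F. F facet_of P \<longrightarrow> (\<exists>i\<in>I. F = P \<inter> {x. w i \<bullet> x + b i = 0}))"

text \<open>P^[+alpha]: facet halfspaces moved outward by alpha.\<close>
definition shift_out :: "'i set \<Rightarrow> ('i \<Rightarrow> 'a::euclidean_space) \<Rightarrow> ('i \<Rightarrow> real) \<Rightarrow> real \<Rightarrow> 'a set" where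
  "shift_out I w b \<alpha> = {x. \<forall>i\<in>I. w i \<bullet> x + b i \<ge> - \<alpha>}"

text \<open>P^[-alpha]: facet halfspaces moved inward by alpha.\<close>
definition shift_in :: "'i set \<Rightarrow> ('i \<Rightarrow> 'a::euclidean_space) \<Rightarrow> ('i \<Rightarrow> real) \<Rightarrow> real \<Rightarrow> 'a set" where
  "shift_in I w b \<alpha> = {x. \<forall>i\<in>I. w i \<bullet> x + b i \<ge> \<alpha>}"

definition margin :: "'i set \<Rightarrow> ('i \<Rightarrow> 'a::euclidean_space) \<Rightarrow> ('i \<Rightarrow> real) \<Rightarrow> real \<Rightarrow> 'a set" where
  "margin I w b \<alpha> = shift_out I w b \<alpha> - shift_in I w b \<alpha>"

text \<open>P^(+alpha) = P + B_alpha (Minkowski sum).\<close>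
definition mink_out :: "'a::euclidean_space set \<Rightarrow> real \<Rightarrow> 'a set" where
  "mink_out P \<alpha> = {x + y | x y. x \<in> P \<and> norm y \<le> \<alpha>}"

text \<open>P^(-alpha) = {p. {p} + B_alpha subset of P}.\<close>
definition mink_in :: "'a::euclidean_space set \<Rightarrow> real \<Rightarrow> 'a set" where
  "mink_in P \<alpha> = {p. \<forall>y. norm y \<le> \<alpha> \<longrightarrow> p + y \<in> P}"

definition envelope :: "'a::euclidean_space set \<Rightarrow> real \<Rightarrow> 'a set" where
  "envelope P \<alpha> = mink_out P \<alpha> - mink_in P \<alpha>"

end

theory Submission
  imports Defs
begin

text \<open>Take \<open>z \<in> P[-\<gamma>]\<close> and \<open>x\<close> in the margin, both in the unit ball. Moving from \<open>x\<close>
  towards \<open>z\<close> by the fraction \<open>t = \<gamma>/2\<close> gives every facet slack at least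
  \<open>t\<gamma> - (1 - t)\<gamma>\<^sup>2/2 \<ge> 0\<close>, so a point of \<open>P\<close> is reached within distance \<open>t\<parallel>x - z\<parallel> \<le> \<gamma>\<close>.
  On the other side, stepping inward along a unit normal shows \<open>P(-\<gamma>) \<subseteq> P[-\<gamma>]\<close>, while \<open>x\<close>
  lies outside \<open>P[-\<gamma>\<^sup>2/2] \<supseteq> P[-\<gamma>]\<close>. Only the halfspace description of \<open>P\<close> is used.\<close>

lemma facet_rep_eq_shift_in_0:
  "facet_rep I w b P \<Longrightarrow> P = shift_in I w b 0"
  unfolding facet_rep_def shift_in_def by auto

lemma shift_in_antimono:
  "\<alpha> \<le> \<beta> \<Longrightarrow> shift_in I w b \<beta> \<subseteq> shift_in I w b \<alpha>"
  unfolding shift_in_def by force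

lemma inner_affine_combination:
  fixes v x z :: "'a::real_inner"
  shows "v \<bullet> ((1 - t) *\<^sub>R x + t *\<^sub>R z) + c = (1 - t) * (v \<bullet> x + c) + t * (v \<bullet> z + c)"
  by (simp add: inner_add_right algebra_simps)

lemma affine_combination_in_shift_in:
  assumes x: "x \<in> shift_out I w b \<alpha>" and z: "z \<in> shift_in I w b \<beta>"
    and t: "0 \<le> t" "t \<le> 1" and slack: "(1 - t) * \<alpha> \<le> t * \<beta>"
  shows "(1 - t) *\<^sub>R x + t *\<^sub>R z \<in> shift_in I w b 0"
proof -
  have "0 \<le> w i \<bullet> ((1 - t) *\<^sub>R x + t *\<^sub>R z) + b i" if i: "i \<in> I" for i
  proof -
    have "(1 - t) * (- \<alpha>) \<le> (1 - t) * (w i \<bullet> x + b i)"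
      using x i t by (intro mult_left_mono) (auto simp: shift_out_def)
    moreover have "t * \<beta> \<le> t * (w i \<bullet> z + b i)"
      using z i t by (intro mult_left_mono) (auto simp: shift_in_def)
    ultimately show ?thesis
      using slack unfolding inner_affine_combination by linarith
  qed
  then show ?thesis by (simp add: shift_in_def)
qed

lemma mink_in_subset_shift_in:
  assumes "\<And>i. i \<in> I \<Longrightarrow> norm (w i) = 1" and "P = shift_in I w b 0" and "0 \<le> \<alpha>"
  shows "mink_in P \<alpha> \<subseteq> shift_in I w b \<alpha>"
proof
  fix x assume x: "x \<in> mink_in P \<alpha>"
  have "\<alpha> \<le> w i \<bullet> x + b i" if i: "i \<in> I" for i
  proof -
    have "w i \<bullet> w i = 1"
      using assms(1)[OF i] by (simp add: dot_square_norm)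
    moreover have "x + (- \<alpha>) *\<^sub>R w i \<in> P"
      using x assms(1)[OF i] \<open>0 \<le> \<alpha>\<close> unfolding mink_in_def by (simp del: scaleR_minus_left)
    then have "0 \<le> w i \<bullet> (x + (- \<alpha>) *\<^sub>R w i) + b i"
      using i assms(2) by (simp add: shift_in_def del: scaleR_minus_left)
    ultimately show ?thesis
      by (simp add: inner_diff_right)
  qed
  then show "x \<in> shift_in I w b \<alpha>" by (simp add: shift_in_def)
qed

lemma mink_outI:
  "y \<in> P \<Longrightarrow> norm (x - y) \<le> \<alpha> \<Longrightarrow> x \<in> mink_out P \<alpha>"
  unfolding mink_out_def by (intro CollectI exI[of _ y] exI[of _ "x - y"]) auto

lemma norm_scaled_step_le:
  fixes x z :: "'a::real_normed_vector"
  assumes "norm x \<le> 1" "norm z \<le> 1" "0 \<le> t"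
  shows "norm (x - ((1 - t) *\<^sub>R x + t *\<^sub>R z)) \<le> 2 * t"
proof -
  have "x - ((1 - t) *\<^sub>R x + t *\<^sub>R z) = t *\<^sub>R (x - z)"
    by (simp add: algebra_simps)
  moreover have "norm (x - z) \<le> 2"
    using norm_triangle_ineq4[of x z] assms by linarith
  ultimately show ?thesis
    using \<open>0 \<le> t\<close> by (simp add: mult_left_mono mult.commute)
qed

theorem theorem11:
  fixes P :: "'a::euclidean_space set"
    and I :: "'i set" and w :: "'i \<Rightarrow> 'a" and b :: "'i \<Rightarrow> real"
    and \<gamma> :: real
  assumes "polytope P"
    and "facet_rep I w b P"
    and "0 < \<gamma>" and "\<gamma> < 1"
    and "shift_in I w b \<gamma> \<inter> {x. norm x \<le> 1} \<noteq> {}"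
  shows "margin I w b (\<gamma>\<^sup>2 / 2) \<inter> {x. norm x \<le> 1} \<subseteq> envelope P \<gamma>"
proof
  fix x assume x: "x \<in> margin I w b (\<gamma>\<^sup>2 / 2) \<inter> {x. norm x \<le> 1}"
  obtain z where z: "z \<in> shift_in I w b \<gamma>" "norm z \<le> 1"
    using assms(5) by auto
  have P: "P = shift_in I w b 0"
    using assms(2) by (rule facet_rep_eq_shift_in_0)
  have unit: "\<And>i. i \<in> I \<Longrightarrow> norm (w i) = 1"
    using assms(2) unfolding facet_rep_def by auto
  define y where "y = (1 - \<gamma> / 2) *\<^sub>R x + (\<gamma> / 2) *\<^sub>R z"
  have "y \<in> P"
    unfolding y_def P using x z(1) assms(3,4)
    by (intro affine_combination_in_shift_in) (auto simp: margin_def power2_eq_square algebra_simps)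
  moreover have "norm (x - y) \<le> \<gamma>"
    using norm_scaled_step_le[of x z "\<gamma> / 2"] x z(2) assms(3) by (simp add: y_def)
  ultimately have "x \<in> mink_out P \<gamma>"
    by (rule mink_outI)
  moreover have "x \<notin> shift_in I w b \<gamma>"
    using x shift_in_antimono[of "\<gamma>\<^sup>2 / 2" \<gamma>] assms(3,4)
    by (auto simp: margin_def power2_eq_square)
  then have "x \<notin> mink_in P \<gamma>"
    using mink_in_subset_shift_in[OF unit P, of \<gamma>] assms(3) by auto
  ultimately show "x \<in> envelope P \<gamma>"
    by (simp add: envelope_def)
qed

end
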